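(* A finite simple graph $\Delta$ is invariant if and only if (a) every connected component of $\Delta$ is an invariant graph, and (b) no two distinct connected components of $\Delta$ having an odd number of edges are isomorphic.
   Context: A finite simple graph is called invariant if every graph automorphism induces an even permutation of its set of edges. *)

theory Defs
  imports "HOL-Combinatorics.Permutations"
begin

definition simple_graph :: "'a set \<Rightarrow> 'a set set \<Rightarrow> bool" where
  "simple_graph V E \<longleftrightarrow> finite V \<and>
     (\<forall>e\<in>E. \<exists>u v. u \<in> V \<and> v \<in> V \<and> u \<noteq> v \<and> e = {u, v})"

definition graph_aut :: "'a set \<Rightarrow> 'a set set \<Rightarrow> ('a \<Rightarrow> 'a) \<Rightarrow> bool" where
  "graph_aut V E \<sigma> \<longleftrightarrow> \<sigma> permutes V \<and>
     (\<forall>u\<in>V. \<forall>v\<in>V. {u, v} \<in> E \<longleftrightarrow> {\<sigma> u, \<sigma> v} \<in> E)"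

definition edge_perm :: "'a set set \<Rightarrow> ('a \<Rightarrow> 'a) \<Rightarrow> 'a set \<Rightarrow> 'a set" where
  "edge_perm E \<sigma> = (\<lambda>e. if e \<in> E then \<sigma> ` e else e)"

definition invariant_graph :: "'a set \<Rightarrow> 'a set set \<Rightarrow> bool" where
  "invariant_graph V E \<longleftrightarrow> (\<forall>\<sigma>. graph_aut V E \<sigma> \<longrightarrow> evenperm (edge_perm E \<sigma>))"

definition adj :: "'a set set \<Rightarrow> 'a \<Rightarrow> 'a \<Rightarrow> bool" where
  "adj E u v \<longleftrightarrow> {u, v} \<in> E"

definition component :: "'a set \<Rightarrow> 'a set set \<Rightarrow> 'a \<Rightarrow> 'a set" where
  "component V E v = {u \<in> V. (adj E)\<^sup>*\<^sup>* v u}"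

definition components :: "'a set \<Rightarrow> 'a set set \<Rightarrow> 'a set set" where
  "components V E = component V E ` V"

definition edges_on :: "'a set set \<Rightarrow> 'a set \<Rightarrow> 'a set set" where
  "edges_on E C = {e \<in> E. e \<subseteq> C}"

definition graph_iso :: "'a set \<Rightarrow> 'a set set \<Rightarrow> 'b set \<Rightarrow> 'b set set \<Rightarrow> bool" where
  "graph_iso V1 E1 V2 E2 \<longleftrightarrow> (\<exists>f. bij_betw f V1 V2 \<and>
     (\<forall>u\<in>V1. \<forall>v\<in>V1. {u, v} \<in> E1 \<longleftrightarrow> {f u, f v} \<in> E2))"

end

theory Submission
  imports Defs
begin

(*
  An automorphism permutes the connected components. If it maps a component C onto a
  different component D, then it restricts to an isomorphism C -> D, and swapping C and D
  along this isomorphism is an automorphism whose action on the edges is a product of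
  |E(C)| disjoint transpositions. This proves necessity of both conditions. For
  sufficiency, induct on the number of moved vertices: an automorphism moving a vertex of
  a component C either maps C to another component, and then it splits off such a swap
  (even, because condition (b) forces |E(C)| to be even), or it stabilises C, and then it
  splits off its restriction to C (even by condition (a)). What remains fixes C pointwise.
*)

lemma involution_split_transpose:
  fixes h :: "'a \<Rightarrow> 'a" and a :: 'a
  assumes "\<And>x. h (h x) = x"
  defines "h' \<equiv> h(a := a, h a := h a)"
  shows "h = Transposition.transpose a (h a) \<circ> h'" and "\<And>x. h' (h' x) = x"
proof -
  have h_a: "h x = a \<longleftrightarrow> x = h a" and h_ha: "h x = h a \<longleftrightarrow> x = a" for x
    using assms(1) by metis+
  show "h = Transposition.transpose a (h a) \<circ> h'"
    using h_a h_ha by (auto simp: fun_eq_iff h'_def transpose_def)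
  show "\<And>x. h' (h' x) = x"
    using assms(1) h_a h_ha by (auto simp: h'_def)
qed

lemma evenperm_involution_iff:
  assumes "finite A" and "\<And>x. h (h x) = x" and "A \<inter> h ` A = {}"
    and "\<And>x. x \<notin> A \<union> h ` A \<Longrightarrow> h x = x"
  shows "evenperm h \<longleftrightarrow> even (card A)"
  using assms
proof (induction A arbitrary: h rule: finite_induct)
  case empty
  then have "h = id"
    by auto
  then show ?case
    by simp
next
  case (insert a A)
  define h' where "h' = h(a := a, h a := h a)"
  have "a \<noteq> h a" "h a \<notin> A"
    using insert.prems(2) by auto
  note split = involution_split_transpose[OF insert.prems(1), of a, folded h'_def]
  have h'_A: "h' ` A = h ` A"
    using \<open>h a \<notin> A\<close> insert.hyps(2) by (auto simp: h'_def)
  have fixed: "h' x = x" if "x \<notin> A \<union> h' ` A" for x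
  proof (cases "x = a \<or> x = h a")
    case False
    then have "h x = x"
      using that h'_A by (intro insert.prems(3)) auto
    then show ?thesis
      using False by (simp add: h'_def)
  qed (auto simp: h'_def)
  have "A \<inter> h' ` A = {}"
    using insert.prems(2) h'_A by blast
  with split(2) fixed have "evenperm h' \<longleftrightarrow> even (card A)"
    by (intro insert.IH)
  moreover have "permutation h'"
  proof (rule permutation_lemma)
    show "finite (A \<union> h' ` A)"
      using insert.hyps(1) by simp
    show "bij h'"
      using split(2) by (rule involuntory_imp_bij)
  qed (use fixed in blast)
  then have "evenperm h \<longleftrightarrow> \<not> evenperm h'"
    using split(1) \<open>a \<noteq> h a\<close> by (metis evenperm_comp permutation_swap_id evenperm_swap)
  ultimately show ?case
    using insert.hyps by simp
qed

definition edge_closed :: "'a set set \<Rightarrow> 'a set \<Rightarrow> bool" where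
  "edge_closed E S \<longleftrightarrow> (\<forall>e\<in>E. e \<inter> S \<noteq> {} \<longrightarrow> e \<subseteq> S)"

lemma edge_closedD: "edge_closed E S \<Longrightarrow> e \<in> E \<Longrightarrow> e \<subseteq> S \<or> e \<inter> S = {}"
  unfolding edge_closed_def by blast

lemma edge_closed_Compl: "edge_closed E S \<Longrightarrow> edge_closed E (- S)"
  unfolding edge_closed_def by blast

lemma edge_perm_edges_on:
  assumes "edge_closed E S" and "\<And>x. x \<notin> S \<Longrightarrow> \<sigma> x = x"
  shows "edge_perm E \<sigma> = edge_perm (edges_on E S) \<sigma>"
proof
  fix e
  have "\<sigma> ` e = e" if "e \<in> E" "\<not> e \<subseteq> S"
  proof -
    have "e \<inter> S = {}"
      using edge_closedD[OF assms(1) that(1)] that(2) by blast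
    then have "\<forall>x\<in>e. \<sigma> x = x"
      using assms(2) by blast
    then show ?thesis
      by simp
  qed
  then show "edge_perm E \<sigma> e = edge_perm (edges_on E S) \<sigma> e"
    by (auto simp: edge_perm_def edges_on_def)
qed

definition swap_along :: "('a \<Rightarrow> 'a) \<Rightarrow> 'a set \<Rightarrow> 'a set \<Rightarrow> 'a \<Rightarrow> 'a" where
  "swap_along f A B y = (if y \<in> A then f y else if y \<in> B then inv_into A f y else y)"

context
  fixes f :: "'a \<Rightarrow> 'a" and A B :: "'a set"
  assumes bij: "bij_betw f A B" and disjoint: "A \<inter> B = {}"
begin

lemma swap_along_swap_along: "swap_along f A B (swap_along f A B y) = y"
  using bij disjoint
  by (auto simp: swap_along_def bij_betw_apply bij_betw_inv_into_left bij_betw_inv_into_right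
      dest: bij_betw_apply[OF bij_betw_inv_into[OF bij]])

lemma swap_along_image: "swap_along f A B ` A = B" "swap_along f A B ` B = A"
proof -
  have "swap_along f A B ` A = f ` A"
    by (rule image_cong) (simp_all add: swap_along_def)
  then show "swap_along f A B ` A = B"
    using bij by (simp add: bij_betw_def)
  have "swap_along f A B ` B = inv_into A f ` B"
    using disjoint by (intro image_cong) (auto simp: swap_along_def)
  then show "swap_along f A B ` B = A"
    using bij_betw_inv_into[OF bij] by (simp add: bij_betw_def)
qed

lemma swap_along_permutes: "A \<union> B \<subseteq> V \<Longrightarrow> swap_along f A B permutes V"
  unfolding permutes_def
  by (metis (no_types, lifting) swap_along_def swap_along_swap_along Un_iff subsetD)

lemma moved_swap_along_comp:
  assumes "inj f"
  shows "{y. (swap_along f A B \<circ> f) y \<noteq> y} \<subseteq> {y. f y \<noteq> y} - A"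
proof
  fix y
  assume "y \<in> {y. (swap_along f A B \<circ> f) y \<noteq> y}"
  then have moved: "swap_along f A B (f y) \<noteq> y"
    by simp
  have "y \<notin> A"
  proof
    assume "y \<in> A"
    then have "f y \<in> B" "f y \<notin> A" "inv_into A f (f y) = y"
      using bij disjoint bij_betw_apply bij_betw_inv_into_left by fastforce+
    then show False
      using moved by (simp add: swap_along_def)
  qed
  moreover have "f y \<noteq> y"
  proof
    assume fixed: "f y = y"
    have "y \<notin> B"
    proof
      assume "y \<in> B"
      then obtain c where "c \<in> A" "y = f c"
        using bij by (auto simp: bij_betw_def)
      then show False
        using fixed \<open>y \<notin> A\<close> injD[OF assms] by metis
    qed
    then show False
      using moved fixed \<open>y \<notin> A\<close> by (simp add: swap_along_def)
  qed
  ultimately show "y \<in> {y. f y \<noteq> y} - A"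
    by simp
qed

end

locale finite_simple_graph =
  fixes V :: "'a set" and E :: "'a set set"
  assumes simple_graph: "simple_graph V E"
begin

lemma finite_V: "finite V"
  using simple_graph by (simp add: simple_graph_def)

lemma edgeE:
  assumes "e \<in> E"
  obtains u v where "u \<in> V" "v \<in> V" "e = {u, v}"
  using simple_graph assms by (auto simp: simple_graph_def)

lemma edge_subset: "e \<in> E \<Longrightarrow> e \<subseteq> V"
  by (auto elim: edgeE)

lemma edge_nonempty: "e \<in> E \<Longrightarrow> e \<noteq> {}"
  by (auto elim: edgeE)

lemma finite_E: "finite E"
  using finite_V edge_subset by (meson Pow_iff finite_Pow_iff finite_subset subsetI)

lemma image_edges_eq:
  assumes "\<sigma> permutes V" and "\<And>e. e \<in> E \<Longrightarrow> \<sigma> ` e \<in> E"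
  shows "(`) \<sigma> ` E = E"
  using finite_E assms(2) inj_on_image[OF inj_on_subset[OF permutes_inj[OF assms(1)] subset_UNIV]]
  by (intro endo_inj_surj) auto

lemma graph_autI:
  assumes "\<sigma> permutes V" and "\<And>e. e \<in> E \<Longrightarrow> \<sigma> ` e \<in> E"
  shows "graph_aut V E \<sigma>"
  unfolding graph_aut_def
proof (intro conjI assms(1) ballI iffI)
  fix u v
  show "{u, v} \<in> E \<Longrightarrow> {\<sigma> u, \<sigma> v} \<in> E"
    using assms(2)[of "{u, v}"] by simp
  assume "{\<sigma> u, \<sigma> v} \<in> E"
  then have "\<sigma> ` {u, v} \<in> (`) \<sigma> ` E"
    using image_edges_eq[OF assms] by simp
  then obtain e where "e \<in> E" "\<sigma> ` {u, v} = \<sigma> ` e"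
    by blast
  then show "{u, v} \<in> E"
    using inj_image_eq_iff[OF permutes_inj[OF assms(1)]] by metis
qed

lemma graph_aut_permutes: "graph_aut V E \<sigma> \<Longrightarrow> \<sigma> permutes V"
  by (simp add: graph_aut_def)

lemma graph_aut_inj: "graph_aut V E \<sigma> \<Longrightarrow> inj \<sigma>"
  using graph_aut_permutes permutes_inj by blast

lemma graph_aut_image_edge:
  assumes "graph_aut V E \<sigma>" and "e \<in> E"
  shows "\<sigma> ` e \<in> E"
proof -
  obtain u v where "u \<in> V" "v \<in> V" "e = {u, v}"
    using assms(2) by (rule edgeE)
  then show ?thesis
    using assms unfolding graph_aut_def by simp
qed

lemma graph_aut_image_edges: "graph_aut V E \<sigma> \<Longrightarrow> (`) \<sigma> ` E = E"
  by (simp add: image_edges_eq graph_aut_permutes graph_aut_image_edge)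

lemma graph_aut_comp:
  assumes "graph_aut V E \<sigma>" and "graph_aut V E \<tau>"
  shows "graph_aut V E (\<sigma> \<circ> \<tau>)"
proof (rule graph_autI)
  show "\<sigma> \<circ> \<tau> permutes V"
    using assms by (simp add: graph_aut_permutes permutes_compose)
  show "(\<sigma> \<circ> \<tau>) ` e \<in> E" if "e \<in> E" for e
    using graph_aut_image_edge[OF assms(1) graph_aut_image_edge[OF assms(2) that]]
    by (simp add: image_comp)
qed

lemma graph_aut_inv:
  assumes "graph_aut V E \<sigma>"
  shows "graph_aut V E (inv \<sigma>)"
proof (rule graph_autI)
  have perm: "\<sigma> permutes V"
    using assms by (rule graph_aut_permutes)
  then show "inv \<sigma> permutes V"
    by (rule permutes_inv)
  fix e
  assume "e \<in> E"
  then obtain e' where "e' \<in> E" "e = \<sigma> ` e'"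
    using graph_aut_image_edges[OF assms] by blast
  then show "inv \<sigma> ` e \<in> E"
    using permutes_inverses(2)[OF perm] by (simp add: image_image)
qed

lemma edge_perm_id [simp]: "edge_perm E id = id"
  by (simp add: edge_perm_def fun_eq_iff)

lemma edge_perm_comp:
  assumes "graph_aut V E \<tau>"
  shows "edge_perm E (\<sigma> \<circ> \<tau>) = edge_perm E \<sigma> \<circ> edge_perm E \<tau>"
  using graph_aut_image_edge[OF assms] by (auto simp: fun_eq_iff edge_perm_def image_comp)

lemma edge_perm_permutes:
  assumes "graph_aut V E \<sigma>"
  shows "edge_perm E \<sigma> permutes E"
proof (rule bij_imp_permutes)
  have "bij_betw ((`) \<sigma>) E E"
    using graph_aut_image_edges[OF assms] inj_on_image[OF inj_on_subset[OF graph_aut_inj[OF assms] subset_UNIV]]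
    by (simp add: bij_betw_def)
  then show "bij_betw (edge_perm E \<sigma>) E E"
    by (rule bij_betw_cong[THEN iffD2, rotated]) (simp add: edge_perm_def)
qed (simp add: edge_perm_def)

lemma permutation_edge_perm: "graph_aut V E \<sigma> \<Longrightarrow> permutation (edge_perm E \<sigma>)"
  using edge_perm_permutes finite_E permutes_imp_permutation by blast

lemma edge_perm_image_edges_on:
  assumes "graph_aut V E \<sigma>"
  shows "edge_perm E \<sigma> ` edges_on E S = edges_on E (\<sigma> ` S)"
proof -
  have inj: "inj \<sigma>"
    using assms by (rule graph_aut_inj)
  have "edge_perm E \<sigma> ` edges_on E S = (`) \<sigma> ` edges_on E S"
    by (rule image_cong) (simp_all add: edge_perm_def edges_on_def)
  also have "\<dots> = edges_on E (\<sigma> ` S)"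
  proof
    show "(`) \<sigma> ` edges_on E S \<subseteq> edges_on E (\<sigma> ` S)"
      using graph_aut_image_edge[OF assms] by (auto simp: edges_on_def)
    show "edges_on E (\<sigma> ` S) \<subseteq> (`) \<sigma> ` edges_on E S"
    proof
      fix e
      assume e: "e \<in> edges_on E (\<sigma> ` S)"
      then have "e \<in> (`) \<sigma> ` E"
        using graph_aut_image_edges[OF assms] by (simp add: edges_on_def)
      then obtain e' where "e' \<in> E" "e = \<sigma> ` e'"
        by blast
      then show "e \<in> (`) \<sigma> ` edges_on E S"
        using e inj by (auto simp: edges_on_def inj_image_subset_iff)
    qed
  qed
  finally show ?thesis .
qed

lemma edges_on_disjoint: "A \<inter> B = {} \<Longrightarrow> edges_on E A \<inter> edges_on E B = {}"
  unfolding edges_on_def using edge_nonempty by blast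

lemma card_edges_on_image:
  assumes "graph_aut V E \<sigma>"
  shows "card (edges_on E (\<sigma> ` S)) = card (edges_on E S)"
  using edge_perm_image_edges_on[OF assms, of S] permutes_inj[OF edge_perm_permutes[OF assms]]
  by (metis card_image inj_on_subset subset_UNIV)

lemma graph_iso_image:
  assumes "graph_aut V E \<sigma>" and "S \<subseteq> V"
  shows "graph_iso S (edges_on E S) (\<sigma> ` S) (edges_on E (\<sigma> ` S))"
  unfolding graph_iso_def
proof (intro exI conjI ballI)
  show "bij_betw \<sigma> S (\<sigma> ` S)"
    using graph_aut_inj[OF assms(1)] by (simp add: inj_on_imp_bij_betw inj_on_subset)
  fix u v
  assume "u \<in> S" "v \<in> S"
  then show "{u, v} \<in> edges_on E S \<longleftrightarrow> {\<sigma> u, \<sigma> v} \<in> edges_on E (\<sigma> ` S)"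
    using assms by (auto simp: edges_on_def graph_aut_def)
qed

lemma graph_aut_restrict:
  assumes aut: "graph_aut V E \<sigma>" and closed: "edge_closed E S" and stable: "\<sigma> ` S = S"
  shows "graph_aut V E (\<lambda>y. if y \<in> S then \<sigma> y else y)"
proof (rule graph_autI)
  let ?\<rho> = "\<lambda>y. if y \<in> S then \<sigma> y else y"
  have perm: "\<sigma> permutes V"
    using aut by (rule graph_aut_permutes)
  have S_into: "\<sigma> y \<in> S" if "y \<in> S" for y
    using stable that by blast
  show "?\<rho> permutes V"
  proof (rule inj_imp_permutes[OF _ finite_V])
    show "inj_on ?\<rho> V"
    proof (rule inj_onI)
      fix y z
      assume "?\<rho> y = ?\<rho> z"
      then show "y = z"
        using S_into by (cases "y \<in> S"; cases "z \<in> S") (auto simp: inj_eq[OF graph_aut_inj[OF aut]])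
    qed
  qed (auto simp: permutes_in_image[OF perm] permutes_not_in[OF perm])
  fix e
  assume "e \<in> E"
  then consider "e \<subseteq> S" | "e \<inter> S = {}"
    using edge_closedD[OF closed] by blast
  then show "?\<rho> ` e \<in> E"
  proof cases
    case 1
    then have "?\<rho> ` e = \<sigma> ` e"
      by (intro image_cong) auto
    then show ?thesis
      using graph_aut_image_edge[OF aut \<open>e \<in> E\<close>] by simp
  next
    case 2
    then have "?\<rho> ` e = e"
      by auto
    then show ?thesis
      using \<open>e \<in> E\<close> by simp
  qed
qed

lemma graph_aut_edges_on_iff:
  assumes "S \<subseteq> V" and closed: "edge_closed E S"
  shows "graph_aut S (edges_on E S) \<sigma> \<longleftrightarrow> \<sigma> permutes S \<and> graph_aut V E \<sigma>"
proof
  assume aut_S: "graph_aut S (edges_on E S) \<sigma>"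
  then have perm: "\<sigma> permutes S"
    by (simp add: graph_aut_def)
  have "graph_aut V E \<sigma>"
  proof (rule graph_autI)
    show "\<sigma> permutes V"
      using perm assms(1) by (rule permutes_subset)
    fix e
    assume "e \<in> E"
    then obtain u v where e: "u \<in> V" "v \<in> V" "e = {u, v}"
      by (rule edgeE)
    consider "e \<subseteq> S" | "e \<inter> S = {}"
      using edge_closedD[OF closed \<open>e \<in> E\<close>] by blast
    then show "\<sigma> ` e \<in> E"
    proof cases
      case 1
      then show ?thesis
        using aut_S \<open>e \<in> E\<close> e by (auto simp: graph_aut_def edges_on_def)
    next
      case 2
      then have "\<forall>x\<in>e. \<sigma> x = x"
        using permutes_not_in[OF perm] by blast
      then show ?thesis
        using \<open>e \<in> E\<close> by simp
    qed
  qed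
  with perm show "\<sigma> permutes S \<and> graph_aut V E \<sigma>"
    by blast
next
  assume "\<sigma> permutes S \<and> graph_aut V E \<sigma>"
  then show "graph_aut S (edges_on E S) \<sigma>"
    using assms(1) by (auto simp: graph_aut_def edges_on_def permutes_in_image)
qed

context
  fixes f :: "'a \<Rightarrow> 'a" and A B :: "'a set"
  assumes closed: "edge_closed E A" "edge_closed E B"
    and disjoint: "A \<inter> B = {}" and subset: "A \<union> B \<subseteq> V"
    and bij: "bij_betw f A B"
    and preserves_edges: "\<And>u v. u \<in> A \<Longrightarrow> v \<in> A \<Longrightarrow> {u, v} \<in> E \<longleftrightarrow> {f u, f v} \<in> E"
begin

lemma graph_aut_swap_along: "graph_aut V E (swap_along f A B)"
proof (rule graph_autI)
  let ?\<tau> = "swap_along f A B"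
  show "?\<tau> permutes V"
    using bij disjoint subset by (rule swap_along_permutes)
  fix e
  assume "e \<in> E"
  then obtain u v where e: "u \<in> V" "v \<in> V" "e = {u, v}"
    by (rule edgeE)
  consider "e \<subseteq> A" | "e \<subseteq> B" | "e \<inter> A = {}" "e \<inter> B = {}"
    using edge_closedD[OF closed(1) \<open>e \<in> E\<close>] edge_closedD[OF closed(2) \<open>e \<in> E\<close>] by blast
  then show "?\<tau> ` e \<in> E"
  proof cases
    case 1
    then show ?thesis
      using \<open>e \<in> E\<close> e preserves_edges by (simp add: swap_along_def)
  next
    case 2
    let ?g = "inv_into A f"
    have "u \<in> B" "v \<in> B" "u \<notin> A" "v \<notin> A"
      using 2 e disjoint by auto
    moreover have "?g u \<in> A" "?g v \<in> A" "f (?g u) = u" "f (?g v) = v"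
      using bij_betw_apply[OF bij_betw_inv_into[OF bij]] bij_betw_inv_into_right[OF bij]
        \<open>u \<in> B\<close> \<open>v \<in> B\<close> by auto
    ultimately show ?thesis
      using \<open>e \<in> E\<close> e preserves_edges[of "?g u" "?g v"] by (simp add: swap_along_def)
  next
    case 3
    then have "\<forall>x\<in>e. ?\<tau> x = x"
      by (auto simp: swap_along_def)
    then show ?thesis
      using \<open>e \<in> E\<close> by simp
  qed
qed

lemma evenperm_edge_perm_swap_along:
  "evenperm (edge_perm E (swap_along f A B)) \<longleftrightarrow> even (card (edges_on E A))"
proof -
  let ?\<tau> = "swap_along f A B" and ?h = "edge_perm E (swap_along f A B)"
  have aut: "graph_aut V E ?\<tau>"
    by (rule graph_aut_swap_along)
  have "?\<tau> \<circ> ?\<tau> = id"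
    using swap_along_swap_along[OF bij disjoint] by (simp add: fun_eq_iff)
  then have "?h \<circ> ?h = id"
    using edge_perm_comp[OF aut, of ?\<tau>] by simp
  then have involution: "?h (?h e) = e" for e
    by (metis comp_apply id_apply)
  have image: "?h ` edges_on E A = edges_on E B"
    using edge_perm_image_edges_on[OF aut] swap_along_image[OF bij disjoint] by simp
  have disjoint_edges: "edges_on E A \<inter> ?h ` edges_on E A = {}"
    unfolding image using disjoint by (rule edges_on_disjoint)
  have fixed: "?h e = e" if "e \<notin> edges_on E A \<union> ?h ` edges_on E A" for e
  proof (cases "e \<in> E")
    case True
    then have "\<not> e \<subseteq> A" "\<not> e \<subseteq> B"
      using that image by (auto simp: edges_on_def)
    then have "e \<inter> A = {}" "e \<inter> B = {}"
      using edge_closedD[OF closed(1) True] edge_closedD[OF closed(2) True] by auto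
    then have "\<forall>x\<in>e. ?\<tau> x = x"
      by (auto simp: swap_along_def)
    then show ?thesis
      by (simp add: edge_perm_def)
  qed (simp add: edge_perm_def)
  have "finite (edges_on E A)"
    using finite_E by (simp add: edges_on_def)
  then show ?thesis
    using involution disjoint_edges fixed by (rule evenperm_involution_iff)
qed

end

lemma adj_symp: "symp (adj E)"
  by (auto intro: sympI simp: adj_def insert_commute)

lemma component_subset: "component V E x \<subseteq> V"
  by (auto simp: component_def)

lemma mem_component_self: "x \<in> V \<Longrightarrow> x \<in> component V E x"
  by (simp add: component_def)

lemma component_eq:
  assumes "y \<in> component V E x"
  shows "component V E y = component V E x"
proof -
  have "(adj E)\<^sup>*\<^sup>* x y"
    using assms by (simp add: component_def)
  moreover have "(adj E)\<^sup>*\<^sup>* y x"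
    using calculation symp_rtranclp[OF adj_symp] by (blast dest: sympD)
  ultimately show ?thesis
    unfolding component_def by (meson rtranclp_trans)
qed

lemma components_disjoint:
  assumes "C \<in> components V E" "D \<in> components V E" "C \<noteq> D"
  shows "C \<inter> D = {}"
proof -
  obtain x y where "C = component V E x" "D = component V E y"
    using assms(1,2) by (auto simp: components_def)
  then have "C = D" if "z \<in> C" "z \<in> D" for z
    using component_eq that by metis
  then show ?thesis
    using assms(3) by blast
qed

lemma components_subset: "C \<in> components V E \<Longrightarrow> C \<subseteq> V"
  using component_subset by (auto simp: components_def)

lemma component_edge_closed: "edge_closed E (component V E x)"
  unfolding edge_closed_def
proof (intro ballI impI)
  fix e
  assume "e \<in> E" and meets: "e \<inter> component V E x \<noteq> {}"
  obtain u v where e: "u \<in> V" "v \<in> V" "e = {u, v}"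
    using \<open>e \<in> E\<close> by (rule edgeE)
  then have "adj E u v" "adj E v u"
    using \<open>e \<in> E\<close> by (simp_all add: adj_def insert_commute)
  then show "e \<subseteq> component V E x"
    using meets e by (auto simp: component_def intro: rtranclp.rtrancl_into_rtrancl)
qed

lemma components_edge_closed: "C \<in> components V E \<Longrightarrow> edge_closed E C"
  using component_edge_closed by (auto simp: components_def)

lemma rtranclp_adj_image:
  assumes "graph_aut V E \<sigma>" and "(adj E)\<^sup>*\<^sup>* u v"
  shows "(adj E)\<^sup>*\<^sup>* (\<sigma> u) (\<sigma> v)"
  using assms(2)
proof induction
  case (step y z)
  have "{y, z} \<in> E"
    using step.hyps(2) by (simp add: adj_def)
  moreover from this have "y \<in> V" "z \<in> V"
    using edge_subset by auto
  ultimately have "adj E (\<sigma> y) (\<sigma> z)"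
    using assms(1) by (simp add: adj_def graph_aut_def)
  with step.IH show ?case
    by (rule rtranclp.rtrancl_into_rtrancl)
qed simp

lemma graph_aut_image_component_subset:
  assumes "graph_aut V E \<sigma>"
  shows "\<sigma> ` component V E x \<subseteq> component V E (\<sigma> x)"
  using rtranclp_adj_image[OF assms] permutes_in_image[OF graph_aut_permutes[OF assms]]
  by (auto simp: component_def)

lemma graph_aut_image_components:
  assumes aut: "graph_aut V E \<sigma>" and "C \<in> components V E"
  shows "\<sigma> ` C \<in> components V E"
proof -
  have perm: "\<sigma> permutes V"
    using aut by (rule graph_aut_permutes)
  obtain x where x: "x \<in> V" "C = component V E x"
    using assms(2) by (auto simp: components_def)
  have "inv \<sigma> ` component V E (\<sigma> x) \<subseteq> component V E x"
    using graph_aut_image_component_subset[OF graph_aut_inv[OF aut], of "\<sigma> x"]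
    by (simp add: permutes_inverses(2)[OF perm])
  then have "component V E (\<sigma> x) \<subseteq> \<sigma> ` component V E x"
    using image_mono image_f_inv_f[OF permutes_surj[OF perm]] by metis
  then have "\<sigma> ` C = component V E (\<sigma> x)"
    using graph_aut_image_component_subset[OF aut, of x] x(2) by blast
  then show ?thesis
    using permutes_in_image[OF perm] x(1) by (simp add: components_def)
qed

lemma invariant_graph_component:
  assumes "invariant_graph V E" and "C \<in> components V E"
  shows "invariant_graph C (edges_on E C)"
  unfolding invariant_graph_def
proof (intro allI impI)
  fix \<sigma>
  assume "graph_aut C (edges_on E C) \<sigma>"
  moreover have "C \<subseteq> V" "edge_closed E C"
    using assms(2) components_subset components_edge_closed by auto
  ultimately have "\<sigma> permutes C" "graph_aut V E \<sigma>"
    using graph_aut_edges_on_iff by blast+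
  then have "edge_perm (edges_on E C) \<sigma> = edge_perm E \<sigma>"
    using edge_perm_edges_on[OF \<open>edge_closed E C\<close>] permutes_not_in by metis
  then show "evenperm (edge_perm (edges_on E C) \<sigma>)"
    using assms(1) \<open>graph_aut V E \<sigma>\<close> by (simp add: invariant_graph_def)
qed

lemma invariant_graph_odd_component_not_iso:
  assumes "invariant_graph V E" and C: "C \<in> components V E" and D: "D \<in> components V E"
    and "C \<noteq> D" and "odd (card (edges_on E C))"
  shows "\<not> graph_iso C (edges_on E C) D (edges_on E D)"
proof
  assume "graph_iso C (edges_on E C) D (edges_on E D)"
  then obtain f where bij: "bij_betw f C D"
    and f_edges: "\<forall>u\<in>C. \<forall>v\<in>C. {u, v} \<in> edges_on E C \<longleftrightarrow> {f u, f v} \<in> edges_on E D"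
    unfolding graph_iso_def by blast
  have preserves: "{u, v} \<in> E \<longleftrightarrow> {f u, f v} \<in> E" if "u \<in> C" "v \<in> C" for u v
    using f_edges that bij_betw_apply[OF bij] by (simp add: edges_on_def)
  have subset: "C \<union> D \<subseteq> V"
    using C D components_subset by blast
  have disjoint: "C \<inter> D = {}"
    using C D \<open>C \<noteq> D\<close> by (rule components_disjoint)
  note swap_facts = components_edge_closed[OF C] components_edge_closed[OF D]
    disjoint subset bij preserves
  have "graph_aut V E (swap_along f C D)"
    by (rule graph_aut_swap_along[OF swap_facts])
  then show False
    using assms(1,5) evenperm_edge_perm_swap_along[OF swap_facts]
    by (simp add: invariant_graph_def)
qed

definition even_split :: "('a \<Rightarrow> 'a) \<Rightarrow> 'a set \<Rightarrow> bool" where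
  "even_split \<sigma> C \<longleftrightarrow> (\<exists>\<pi> \<sigma>'. graph_aut V E \<pi> \<and> evenperm (edge_perm E \<pi>) \<and>
     graph_aut V E \<sigma>' \<and> {y. \<sigma>' y \<noteq> y} \<subseteq> {y. \<sigma> y \<noteq> y} - C \<and> \<sigma> = \<pi> \<circ> \<sigma>')"

lemma invariant_graphI_even_split:
  assumes split: "\<And>\<sigma> x. graph_aut V E \<sigma> \<Longrightarrow> \<sigma> x \<noteq> x \<Longrightarrow> even_split \<sigma> {x}"
  shows "invariant_graph V E"
proof -
  have "evenperm (edge_perm E \<sigma>)" if "graph_aut V E \<sigma>" for \<sigma>
    using that
  proof (induction "card {y. \<sigma> y \<noteq> y}" arbitrary: \<sigma> rule: less_induct)
    case less
    show ?case
    proof (cases "\<sigma> = id")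
      case False
      then obtain x where "\<sigma> x \<noteq> x"
        by (metis eq_id_iff)
      then obtain \<pi> \<sigma>' where \<pi>: "graph_aut V E \<pi>" "evenperm (edge_perm E \<pi>)"
        and \<sigma>': "graph_aut V E \<sigma>'" "{y. \<sigma>' y \<noteq> y} \<subseteq> {y. \<sigma> y \<noteq> y} - {x}"
        and \<sigma>_eq: "\<sigma> = \<pi> \<circ> \<sigma>'"
        using split[OF less.prems] unfolding even_split_def by blast
      have "finite {y. \<sigma> y \<noteq> y}"
        using graph_aut_permutes[OF less.prems] finite_V
        by (intro permutation_finite_support permutes_imp_permutation)
      then have "card {y. \<sigma>' y \<noteq> y} < card {y. \<sigma> y \<noteq> y}"
        using \<sigma>'(2) \<open>\<sigma> x \<noteq> x\<close> by (intro psubset_card_mono) auto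
      then have "evenperm (edge_perm E \<sigma>')"
        using less.hyps \<sigma>'(1) by blast
      then show ?thesis
        using \<pi> \<sigma>_eq edge_perm_comp[OF \<sigma>'(1), of \<pi>]
          evenperm_comp[OF permutation_edge_perm[OF \<pi>(1)] permutation_edge_perm[OF \<sigma>'(1)]]
        by simp
    qed simp
  qed
  then show ?thesis
    by (simp add: invariant_graph_def)
qed

lemma even_split_component_moved:
  assumes aut: "graph_aut V E \<sigma>" and C: "C \<in> components V E" and "\<sigma> ` C \<noteq> C"
    and even: "even (card (edges_on E C))"
  shows "even_split \<sigma> C"
proof -
  let ?D = "\<sigma> ` C"
  let ?\<tau> = "swap_along \<sigma> C ?D"
  have D: "?D \<in> components V E"
    using aut C by (rule graph_aut_image_components)
  have disjoint: "C \<inter> ?D = {}"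
    using C D \<open>\<sigma> ` C \<noteq> C\<close> by (intro components_disjoint) auto
  have bij: "bij_betw \<sigma> C ?D"
    using graph_aut_inj[OF aut] by (simp add: inj_on_imp_bij_betw inj_on_subset)
  have subset: "C \<union> ?D \<subseteq> V"
    using C D components_subset by blast
  have preserves: "{u, v} \<in> E \<longleftrightarrow> {\<sigma> u, \<sigma> v} \<in> E" if "u \<in> C" "v \<in> C" for u v
    using aut that components_subset[OF C] by (auto simp: graph_aut_def)
  note swap_facts = components_edge_closed[OF C] components_edge_closed[OF D]
    disjoint subset bij preserves
  have "graph_aut V E ?\<tau>"
    by (rule graph_aut_swap_along[OF swap_facts])
  moreover have "evenperm (edge_perm E ?\<tau>)"
    using even by (simp add: evenperm_edge_perm_swap_along[OF swap_facts])
  moreover have "graph_aut V E (?\<tau> \<circ> \<sigma>)"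
    using calculation(1) aut by (rule graph_aut_comp)
  moreover have "\<sigma> = ?\<tau> \<circ> (?\<tau> \<circ> \<sigma>)"
    using swap_along_swap_along[OF bij disjoint] by (simp add: fun_eq_iff)
  moreover have "{y. (?\<tau> \<circ> \<sigma>) y \<noteq> y} \<subseteq> {y. \<sigma> y \<noteq> y} - C"
    using bij disjoint graph_aut_inj[OF aut] by (rule moved_swap_along_comp)
  ultimately show ?thesis
    unfolding even_split_def by blast
qed

lemma even_split_component_stable:
  assumes aut: "graph_aut V E \<sigma>" and C: "C \<in> components V E" and stable: "\<sigma> ` C = C"
    and invariant_C: "invariant_graph C (edges_on E C)"
  shows "even_split \<sigma> C"
proof -
  define \<rho> where "\<rho> = (\<lambda>y. if y \<in> C then \<sigma> y else y)"
  define \<sigma>' where "\<sigma>' = (\<lambda>y. if y \<in> - C then \<sigma> y else y)"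
  have closed: "edge_closed E C"
    using C by (rule components_edge_closed)
  have stable_Compl: "\<sigma> ` (- C) = - C"
    using stable bij_image_Compl_eq[OF permutes_bij[OF graph_aut_permutes[OF aut]]] by simp
  have \<rho>_aut: "graph_aut V E \<rho>"
    unfolding \<rho>_def using aut closed stable by (rule graph_aut_restrict)
  have \<sigma>'_aut: "graph_aut V E \<sigma>'"
    unfolding \<sigma>'_def using aut edge_closed_Compl[OF closed] stable_Compl by (rule graph_aut_restrict)
  have "\<rho> permutes C"
    using graph_aut_permutes[OF \<rho>_aut] by (rule permutes_superset) (simp add: \<rho>_def)
  then have "graph_aut C (edges_on E C) \<rho>"
    using \<rho>_aut graph_aut_edges_on_iff[OF components_subset[OF C] closed] by blast
  then have "evenperm (edge_perm (edges_on E C) \<rho>)"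
    using invariant_C by (simp add: invariant_graph_def)
  moreover have "edge_perm E \<rho> = edge_perm (edges_on E C) \<rho>"
    using closed by (rule edge_perm_edges_on) (simp add: \<rho>_def)
  moreover have "\<sigma> = \<rho> \<circ> \<sigma>'"
    using stable_Compl by (auto simp: fun_eq_iff \<rho>_def \<sigma>'_def)
  moreover have "{y. \<sigma>' y \<noteq> y} \<subseteq> {y. \<sigma> y \<noteq> y} - C"
    by (auto simp: \<sigma>'_def)
  ultimately show ?thesis
    unfolding even_split_def using \<rho>_aut \<sigma>'_aut by auto
qed

lemma invariant_graphI_components:
  assumes invariant: "\<forall>C\<in>components V E. invariant_graph C (edges_on E C)"
    and odd_not_iso: "\<forall>C\<in>components V E. \<forall>D\<in>components V E.
      C \<noteq> D \<and> odd (card (edges_on E C)) \<and> odd (card (edges_on E D)) \<longrightarrow>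
      \<not> graph_iso C (edges_on E C) D (edges_on E D)"
  shows "invariant_graph V E"
proof (rule invariant_graphI_even_split)
  fix \<sigma> x
  assume aut: "graph_aut V E \<sigma>" and "\<sigma> x \<noteq> x"
  then have "x \<in> V"
    using permutes_not_in[OF graph_aut_permutes[OF aut]] by blast
  define C where "C = component V E x"
  have C: "C \<in> components V E" "x \<in> C"
    using \<open>x \<in> V\<close> by (simp_all add: C_def components_def mem_component_self)
  have "even_split \<sigma> C"
  proof (cases "\<sigma> ` C = C")
    case True
    then show ?thesis
      using aut C(1) invariant even_split_component_stable by blast
  next
    case False
    have "\<sigma> ` C \<in> components V E"
      using aut C(1) by (rule graph_aut_image_components)
    moreover have "graph_iso C (edges_on E C) (\<sigma> ` C) (edges_on E (\<sigma> ` C))"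
      using aut components_subset[OF C(1)] by (rule graph_iso_image)
    ultimately have "even (card (edges_on E C))"
      using odd_not_iso C(1) False card_edges_on_image[OF aut] by metis
    then show ?thesis
      by (rule even_split_component_moved[OF aut C(1) False])
  qed
  then show "even_split \<sigma> {x}"
    using C(2) unfolding even_split_def by blast
qed

end

theorem lemma2p10:
  fixes V :: "'a set" and E :: "'a set set"
  assumes "simple_graph V E"
  shows "invariant_graph V E \<longleftrightarrow>
    ((\<forall>C\<in>components V E. invariant_graph C (edges_on E C)) \<and>
     (\<forall>C1\<in>components V E. \<forall>C2\<in>components V E.
        C1 \<noteq> C2 \<and> odd (card (edges_on E C1)) \<and> odd (card (edges_on E C2)) \<longrightarrow>
        \<not> graph_iso C1 (edges_on E C1) C2 (edges_on E C2)))"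
proof -
  interpret finite_simple_graph V E
    using assms by (rule finite_simple_graph.intro)
  show ?thesis
    using invariant_graph_component invariant_graph_odd_component_not_iso
      invariant_graphI_components by blast
qed

end
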